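(* Let $f:\mathbb{R}^n\to(-\infty,+\infty]$ be proper, lower semicontinuous and prox-bounded with threshold $\lambda_f>0$, let $0<\lambda<\lambda_f$ and let $x\in\operatorname{dom}f$. Then the following are equivalent: (a) $P_\lambda f(x)$ is a singleton; (b) $e_\lambda f$ is strictly differentiable at $x$; (c) $(\lambda f+j)^*$ is (strictly) differentiable at $x$; (d) there exists $u\in P_\lambda f(x)$ such that $\lambda f+j$ is essentially strongly convex at $u$ for $x$. When one of these holds, $P_\lambda f(x)=\{\nabla(\lambda f+j)^*(x)\}$.
   Context: $j:=\frac12\|\cdot\|^2$; $g^*$ denotes the Legendre–Fenchel conjugate. $e_\lambda f(x):=\inf_y\{f(y)+\frac1{2\lambda}\|y-x\|^2\}$, $P_\lambda f(x):=\operatorname{argmin}_y\{f(y)+\frac1{2\lambda}\|y-x\|^2\}$; prox-bounded with threshold $\lambda_f=\sup\{\lambda>0:e_\lambda f(x)>-\infty\text{ for some }x\}$. Let $\Gamma_0$ be the class of proper lsc convex $\psi:[0,\infty)\to[0,\infty]$ with $\psi(t)=0$ iff $t=0$. A proper lsc $g$ is essentially strongly convex at $u\in\operatorname{dom}g$ for $x\in\mathbb{R}^n$ if there is $\psi\in\Gamma_0$ with $g(y)\ge g(u)+\langle y-u,x\rangle+\psi(\|y-u\|)$ for all $y\in\mathbb{R}^n$. *)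

theory Defs
  imports "HOL-Analysis.Analysis"
begin

text \<open>Extended-real-valued functions on a Euclidean space: values in (-inf,+inf] are
  encoded as ereal values different from -inf.\<close>

definition proper_fun :: "('a \<Rightarrow> ereal) \<Rightarrow> bool" where
  "proper_fun f \<longleftrightarrow> (\<forall>x. f x \<noteq> -\<infinity>) \<and> (\<exists>x. f x < \<infinity>)"

definition edom :: "('a \<Rightarrow> ereal) \<Rightarrow> 'a set" where
  "edom f = {x. f x < \<infinity>}"

definition lsc :: "('a::topological_space \<Rightarrow> ereal) \<Rightarrow> bool" where
  "lsc f \<longleftrightarrow> (\<forall>x. f x \<le> Liminf (at x) f)"

definition moreau_env :: "real \<Rightarrow> ('a::real_normed_vector \<Rightarrow> ereal) \<Rightarrow> 'a \<Rightarrow> ereal" where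
  "moreau_env lam f x = (INF y. f y + ereal (norm (y - x) ^ 2 / (2 * lam)))"

definition prox_map :: "real \<Rightarrow> ('a::real_normed_vector \<Rightarrow> ereal) \<Rightarrow> 'a \<Rightarrow> 'a set" where
  "prox_map lam f x = {y. \<forall>z. f y + ereal (norm (y - x) ^ 2 / (2 * lam))
                               \<le> f z + ereal (norm (z - x) ^ 2 / (2 * lam))}"

definition prox_bounded :: "('a::real_normed_vector \<Rightarrow> ereal) \<Rightarrow> bool" where
  "prox_bounded f \<longleftrightarrow> (\<exists>lam>0. \<exists>x. moreau_env lam f x > -\<infinity>)"

definition prox_threshold :: "('a::real_normed_vector \<Rightarrow> ereal) \<Rightarrow> ereal" where
  "prox_threshold f = Sup {ereal lam | lam. lam > 0 \<and> (\<exists>x. moreau_env lam f x > -\<infinity>)}"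

definition jfun :: "'a::real_normed_vector \<Rightarrow> ereal" where
  "jfun x = ereal (norm x ^ 2 / 2)"

definition fconj :: "('a::real_inner \<Rightarrow> ereal) \<Rightarrow> 'a \<Rightarrow> ereal" where
  "fconj g x = (SUP y. ereal (inner x y) - g y)"

definition strictly_differentiable ::
    "('a::real_normed_vector \<Rightarrow> 'b::real_normed_vector) \<Rightarrow> 'a \<Rightarrow> bool" where
  "strictly_differentiable F x \<longleftrightarrow>
     (\<exists>D. bounded_linear D \<and>
        ((\<lambda>p. (F (fst p) - F (snd p) - D (fst p - snd p)) /\<^sub>R norm (fst p - snd p))
           \<longlongrightarrow> 0) (at (x, x) within {p. fst p \<noteq> snd p}))"

text \<open>The class Gamma_0: proper lsc convex psi : [0,inf) -> [0,inf] with psi t = 0 iff t = 0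
  (only the values on [0,inf) are relevant).\<close>
definition Gamma0 :: "(real \<Rightarrow> ereal) \<Rightarrow> bool" where
  "Gamma0 psi \<longleftrightarrow>
     (\<forall>t\<ge>0. psi t \<ge> 0) \<and>
     (\<forall>t\<ge>0. psi t = 0 \<longleftrightarrow> t = 0) \<and>
     (\<forall>a\<ge>0. \<forall>b\<ge>0. \<forall>\<theta>\<in>{0..1}.
        psi (\<theta> * a + (1 - \<theta>) * b) \<le> ereal \<theta> * psi a + ereal (1 - \<theta>) * psi b) \<and>
     (\<forall>t\<ge>0. psi t \<le> Liminf (at t within {0..}) psi)"

definition ess_strongly_convex_at :: "('a::real_inner \<Rightarrow> ereal) \<Rightarrow> 'a \<Rightarrow> 'a \<Rightarrow> bool" where
  "ess_strongly_convex_at g u x \<longleftrightarrow>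
     u \<in> edom g \<and>
     (\<exists>psi. Gamma0 psi \<and> (\<forall>y. g y \<ge> g u + ereal (inner (y - u) x) + psi (norm (y - u))))"

end

(* Write G = lam f + j. For every z, lam (f y + |y - z|^2 / (2 lam)) = G y - <z, y> + |z|^2 / 2,
   so P_lam f z is the set of minimisers of the tilted function G - <z, _> and
   G^* z = - min (G - <z, _>); also lam e_lam f = j - G^*. Below the prox-threshold the tilted
   functions grow quadratically, so minimisers exist, G^* is finite, and every element of P_lam f z is
   a subgradient of G^* at z. Hence differentiability of G^* at x forces P_lam f x to be a singleton.
   Conversely, if P_lam f x = {v}, lower semicontinuity and growth make v a well-separated minimiser
   of G - <x, _>, so minimisers of nearby tilts stay close to v: this continuity of the subgradients
   gives strict differentiability of G^* with gradient v, and the upper envelope of the affine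
   minorants of the growth of G - <x, _> away from v is a Gamma_0 modulus of essential strong
   convexity at v. *)

theory Submission
  imports Defs
begin

section \<open>Lower semicontinuity\<close>

lemma lsc_iff_eventually_greater:
  "lsc F \<longleftrightarrow> (\<forall>y c. c < F y \<longrightarrow> (\<forall>\<^sub>F z in at y. c < F z))"
  by (simp add: lsc_def le_Liminf_iff)

lemma lsc_open_superlevel:
  assumes "lsc F" shows "open {z. c < F z}"
  unfolding open_subopen[of "{z. c < F z}"]
proof
  fix y assume y: "y \<in> {z. c < F z}"
  then have "\<forall>\<^sub>F z in at y. c < F z" using assms by (simp add: lsc_iff_eventually_greater)
  with y have "\<forall>\<^sub>F z in nhds y. c < F z" by (auto simp: eventually_at_filter elim: eventually_mono)
  then show "\<exists>T. open T \<and> y \<in> T \<and> T \<subseteq> {z. c < F z}"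
    by (auto simp: eventually_nhds)
qed

lemma lsc_attains_min_on_compact:
  assumes "lsc F" "compact K" "K \<noteq> {}"
  obtains y where "y \<in> K" "\<And>z. z \<in> K \<Longrightarrow> F y \<le> F z"
proof -
  have "\<exists>y\<in>K. \<forall>z\<in>K. F y \<le> F z"
  proof (rule ccontr)
    assume no_min: "\<not> ?thesis"
    define m where "m = (INF z\<in>K. F z)"
    have "\<exists>s. m < s \<and> s < F y" if "y \<in> K" for y
    proof -
      obtain z where "z \<in> K" "F z < F y" using no_min \<open>y \<in> K\<close> by (auto simp: not_le)
      then have "m < F y" unfolding m_def by (meson INF_lower le_less_trans)
      then show ?thesis by (rule dense)
    qed
    then obtain t where t: "\<And>y. y \<in> K \<Longrightarrow> m < t y \<and> t y < F y" by metis
    obtain K' where K': "K' \<subseteq> K" "finite K'" "K \<subseteq> (\<Union>y\<in>K'. {z. t y < F z})"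
      by (rule compactE_image[OF assms(2), of K "\<lambda>y. {z. t y < F z}"])
         (use t lsc_open_superlevel[OF assms(1)] in auto)
    have "K' \<noteq> {}" using K' assms(3) by auto
    then have "m < Min (t ` K')" using K' t by auto
    also have "Min (t ` K') \<le> m"
      unfolding m_def
    proof (rule INF_greatest)
      fix z assume "z \<in> K"
      then obtain y where "y \<in> K'" "t y < F z" using K'(3) by auto
      moreover from this have "Min (t ` K') \<le> t y" using K'(2) by simp
      ultimately show "Min (t ` K') \<le> F z" by simp
    qed
    finally show False by simp
  qed
  then show ?thesis using that by blast
qed

lemma lsc_attains_min_coercive:
  fixes F :: "'a::heine_borel \<Rightarrow> ereal"
  assumes "lsc F" and "\<And>y. T \<le> dist y y0 \<Longrightarrow> F y0 \<le> F y"
  shows "\<exists>u. \<forall>y. F u \<le> F y"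
proof -
  obtain u where "u \<in> cball y0 \<bar>T\<bar>" and u: "\<And>y. y \<in> cball y0 \<bar>T\<bar> \<Longrightarrow> F u \<le> F y"
    using lsc_attains_min_on_compact[OF assms(1) compact_cball, of y0 "\<bar>T\<bar>"] by auto
  have "F u \<le> F y" for y
  proof (cases "y \<in> cball y0 \<bar>T\<bar>")
    case False
    then have "F y0 \<le> F y" using assms(2) by (simp add: dist_commute)
    then show ?thesis using u[of y0] by simp
  qed (rule u)
  then show ?thesis by blast
qed

lemma lsc_cmult:
  fixes F :: "'a::perfect_space \<Rightarrow> ereal"
  assumes "lsc F" "0 \<le> c" shows "lsc (\<lambda>z. ereal c * F z)"
  using assms by (simp add: lsc_def Liminf_ereal_mult_left ereal_mult_left_mono)

lemma lsc_add_continuous: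
  assumes "lsc F" "continuous_on UNIV k"
  shows "lsc (\<lambda>z. F z + ereal (k z))"
  unfolding lsc_iff_eventually_greater
proof (intro allI impI)
  fix y c assume "c < F y + ereal (k y)"
  then obtain r where r: "c < ereal r" "ereal r < F y + ereal (k y)" using ereal_dense2 by blast
  then have "ereal (r - k y) < F y" by (cases "F y") auto
  then obtain d where d: "ereal (r - k y) < ereal d" "ereal d < F y" using ereal_dense2 by blast
  have "\<forall>\<^sub>F z in at y. ereal d < F z" using assms(1) d(2) by (simp add: lsc_iff_eventually_greater)
  moreover have "\<forall>\<^sub>F z in at y. r - d < k z"
    using assms(2) d(1) by (intro order_tendstoD(1)) (auto simp: continuous_on_def)
  ultimately show "\<forall>\<^sub>F z in at y. c < F z + ereal (k z)"
  proof eventually_elim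
    case (elim z)
    then have "ereal r < F z + ereal (k z)" by (cases "F z") auto
    then show ?case by (rule less_trans[OF r(1)])
  qed
qed

lemma quadratic_dominates_linear:
  fixes \<alpha> \<beta> \<gamma> :: real
  assumes "\<alpha> > 0"
  obtains S where "\<And>s. S \<le> s \<Longrightarrow> \<beta> * s + \<gamma> \<le> \<alpha> * s\<^sup>2"
proof
  fix s assume "max 1 ((\<bar>\<beta>\<bar> + \<bar>\<gamma>\<bar>) / \<alpha>) \<le> s"
  then have "1 \<le> s" "\<bar>\<beta>\<bar> + \<bar>\<gamma>\<bar> \<le> \<alpha> * s"
    using assms by (auto simp: pos_divide_le_eq mult.commute)
  have "\<beta> * s \<le> \<bar>\<beta>\<bar> * s" using \<open>1 \<le> s\<close> by (intro mult_right_mono) auto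
  moreover have "\<bar>\<gamma>\<bar> * 1 \<le> \<bar>\<gamma>\<bar> * s" using \<open>1 \<le> s\<close> by (intro mult_left_mono) auto
  ultimately have "\<beta> * s + \<gamma> \<le> (\<bar>\<beta>\<bar> + \<bar>\<gamma>\<bar>) * s"
    using abs_ge_self[of \<gamma>] by (simp add: distrib_right)
  also have "\<dots> \<le> (\<alpha> * s) * s"
    using \<open>1 \<le> s\<close> \<open>\<bar>\<beta>\<bar> + \<bar>\<gamma>\<bar> \<le> \<alpha> * s\<close> by (intro mult_right_mono) auto
  finally show "\<beta> * s + \<gamma> \<le> \<alpha> * s\<^sup>2" by (simp add: power2_eq_square mult.assoc)
qed

section \<open>Strict differentiability\<close>

definition has_strict_derivative ::
    "('a::real_normed_vector \<Rightarrow> 'b::real_normed_vector) \<Rightarrow> ('a \<Rightarrow> 'b) \<Rightarrow> 'a \<Rightarrow> bool" where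
  "has_strict_derivative F D x \<longleftrightarrow>
     bounded_linear D \<and>
     ((\<lambda>p. (F (fst p) - F (snd p) - D (fst p - snd p)) /\<^sub>R norm (fst p - snd p)) \<longlongrightarrow> 0)
       (at (x, x) within {p. fst p \<noteq> snd p})"

lemma strictly_differentiable_iff: "strictly_differentiable F x \<longleftrightarrow> (\<exists>D. has_strict_derivative F D x)"
  by (simp add: strictly_differentiable_def has_strict_derivative_def)

lemma has_strict_derivative_imp_has_derivative:
  assumes "has_strict_derivative F D x" shows "(F has_derivative D) (at x)"
proof -
  have lim: "filterlim (\<lambda>y. (y, x)) (at (x, x) within {p. fst p \<noteq> snd p}) (at x)"
    unfolding filterlim_at by (auto simp: eventually_at_filter intro!: tendsto_intros)
  have "((\<lambda>p. (F (fst p) - F (snd p) - D (fst p - snd p)) /\<^sub>R norm (fst p - snd p)) \<longlongrightarrow> 0)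
       (at (x, x) within {p. fst p \<noteq> snd p})"
    using assms by (simp add: has_strict_derivative_def)
  from filterlim_compose[OF this lim]
  have "((\<lambda>y. (F y - F x - D (y - x)) /\<^sub>R norm (y - x)) \<longlongrightarrow> 0) (at x)"
    by simp
  then show ?thesis using assms by (simp add: has_derivative_at_within has_strict_derivative_def)
qed

lemma has_strict_derivativeI:
  assumes "bounded_linear D"
    and "\<And>e. e > 0 \<Longrightarrow> \<exists>d>0. \<forall>z w. dist z x < d \<longrightarrow> dist w x < d \<longrightarrow>
                 norm (F z - F w - D (z - w)) \<le> e * norm (z - w)"
  shows "has_strict_derivative F D x"
  unfolding has_strict_derivative_def
proof (intro conjI assms tendstoI)
  fix e :: real assume "e > 0"
  then obtain d where "d > 0" and d: "\<forall>z w. dist z x < d \<longrightarrow> dist w x < d \<longrightarrow>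
                 norm (F z - F w - D (z - w)) \<le> e/2 * norm (z - w)"
    using assms(2)[of "e/2"] by auto
  show "\<forall>\<^sub>F p in at (x, x) within {p. fst p \<noteq> snd p}.
          dist ((F (fst p) - F (snd p) - D (fst p - snd p)) /\<^sub>R norm (fst p - snd p)) 0 < e"
    unfolding eventually_at
  proof (intro exI[of _ d] conjI ballI impI \<open>d > 0\<close>)
    fix p :: "'a \<times> 'a" assume "p \<in> {p. fst p \<noteq> snd p}" "p \<noteq> (x, x) \<and> dist p (x, x) < d"
    moreover obtain z w where p: "p = (z, w)" by (cases p)
    ultimately have "z \<noteq> w" "dist z x < d" "dist w x < d"
      using dist_fst_le[of p "(x, x)"] dist_snd_le[of p "(x, x)"] by auto
    then have "norm (F z - F w - D (z - w)) \<le> e/2 * norm (z - w)" "norm (z - w) > 0"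
      using d by auto
    then have "norm (F z - F w - D (z - w)) / norm (z - w) \<le> e/2"
      by (simp add: pos_divide_le_eq)
    moreover have "dist ((F (fst p) - F (snd p) - D (fst p - snd p)) /\<^sub>R norm (fst p - snd p)) 0
        = norm (F z - F w - D (z - w)) / norm (z - w)"
      by (simp add: p divide_inverse_commute)
    ultimately show "dist ((F (fst p) - F (snd p) - D (fst p - snd p)) /\<^sub>R norm (fst p - snd p)) 0 < e"
      using \<open>e > 0\<close> by linarith
  qed
qed

lemma has_strict_derivative_lincomb:
  fixes F K :: "'a::real_normed_vector \<Rightarrow> real"
  assumes "has_strict_derivative F D x" "has_strict_derivative K E x"
  shows "has_strict_derivative (\<lambda>z. a * F z + b * K z) (\<lambda>h. a * D h + b * E h) x"
proof -
  let ?q = "\<lambda>F D p. (F (fst p) - F (snd p) - D (fst p - snd p)) /\<^sub>R norm (fst p - snd p)"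
  have "bounded_linear (\<lambda>h. a * D h + b * E h)"
    using assms by (intro bounded_linear_add bounded_linear_const_mult) (auto simp: has_strict_derivative_def)
  moreover have "(?q F D \<longlongrightarrow> 0) (at (x, x) within {p. fst p \<noteq> snd p})"
    "(?q K E \<longlongrightarrow> 0) (at (x, x) within {p. fst p \<noteq> snd p})"
    using assms by (simp_all add: has_strict_derivative_def)
  from tendsto_add[OF tendsto_mult_left[OF this(1), of a] tendsto_mult_left[OF this(2), of b]]
  have "((\<lambda>p. a * ?q F D p + b * ?q K E p) \<longlongrightarrow> 0) (at (x, x) within {p. fst p \<noteq> snd p})"
    by simp
  moreover have "(\<lambda>p. a * ?q F D p + b * ?q K E p) = ?q (\<lambda>z. a * F z + b * K z) (\<lambda>h. a * D h + b * E h)"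
    by (rule ext) (simp add: algebra_simps)
  ultimately show ?thesis by (simp add: has_strict_derivative_def)
qed

lemma has_strict_derivative_half_norm_power2:
  "has_strict_derivative (\<lambda>z. norm z ^ 2 / 2) (inner x) (x::'a::real_inner)"
proof (rule has_strict_derivativeI)
  show "bounded_linear (inner x)" by (rule bounded_linear_inner_right)
  fix e :: real assume "e > 0"
  show "\<exists>d>0. \<forall>z w. dist z x < d \<longrightarrow> dist w x < d \<longrightarrow>
      norm (norm z ^ 2 / 2 - norm w ^ 2 / 2 - inner x (z - w)) \<le> e * norm (z - w)"
  proof (intro exI[of _ e] conjI allI impI \<open>e > 0\<close>)
    fix z w assume "dist z x < e" "dist w x < e"
    have "norm z ^ 2 / 2 - norm w ^ 2 / 2 - inner x (z - w) = inner ((z - x) + (w - x)) (z - w) / 2"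
      by (simp add: power2_norm_eq_inner inner_diff_left inner_diff_right inner_add_left
          inner_add_right inner_commute algebra_simps)
    moreover have "\<bar>inner ((z - x) + (w - x)) (z - w)\<bar> \<le> norm ((z - x) + (w - x)) * norm (z - w)"
      by (rule Cauchy_Schwarz_ineq2)
    moreover have "norm ((z - x) + (w - x)) \<le> 2 * e"
      using norm_triangle_ineq[of "z - x" "w - x"] \<open>dist z x < e\<close> \<open>dist w x < e\<close>
      by (simp add: dist_norm)
    then have "norm ((z - x) + (w - x)) * norm (z - w) \<le> 2 * e * norm (z - w)"
      by (rule mult_right_mono) simp
    ultimately show "norm (norm z ^ 2 / 2 - norm w ^ 2 / 2 - inner x (z - w)) \<le> e * norm (z - w)"
      by simp
  qed
qed

lemma has_derivative_subgradient_eq: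
  fixes \<phi> :: "'a::real_inner \<Rightarrow> real"
  assumes "(\<phi> has_derivative D) (at x)" and "\<And>z. \<phi> x + inner (z - x) u \<le> \<phi> z"
  shows "D h = inner u h"
proof -
  have "((\<lambda>z. \<phi> z - inner z u) has_derivative (\<lambda>h. D h - inner h u)) (at x)"
    by (intro has_derivative_diff assms(1) bounded_linear_imp_has_derivative bounded_linear_inner_left)
  moreover have "\<forall>\<^sub>F z in at x. \<phi> x - inner x u \<le> \<phi> z - inner z u"
    using assms(2) by (intro always_eventually) (auto simp: inner_diff_left algebra_simps)
  ultimately have "(\<lambda>h. D h - inner h u) = (\<lambda>h. 0)" by (rule has_derivative_local_min)
  then have "D h - inner h u = 0" by (rule fun_cong)
  then show ?thesis by (simp add: inner_commute)
qed

lemma has_strict_derivative_of_subgradients: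
  fixes \<phi> :: "'a::real_inner \<Rightarrow> real"
  assumes subgradient: "\<And>z u w. u \<in> S z \<Longrightarrow> \<phi> z + inner (w - z) u \<le> \<phi> w"
    and nonempty: "\<And>z. S z \<noteq> {}"
    and near: "\<And>e. e > 0 \<Longrightarrow> \<exists>d>0. \<forall>z u. dist z x < d \<longrightarrow> u \<in> S z \<longrightarrow> dist u v < e"
  shows "has_strict_derivative \<phi> (inner v) x"
proof (rule has_strict_derivativeI)
  show "bounded_linear (inner v)" by (rule bounded_linear_inner_right)
  fix e :: real assume "e > 0"
  then obtain d where "d > 0" and d: "\<And>z u. dist z x < d \<Longrightarrow> u \<in> S z \<Longrightarrow> dist u v < e"
    using near by blast
  show "\<exists>d>0. \<forall>z w. dist z x < d \<longrightarrow> dist w x < d \<longrightarrow>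
      norm (\<phi> z - \<phi> w - inner v (z - w)) \<le> e * norm (z - w)"
  proof (intro exI[of _ d] conjI allI impI \<open>d > 0\<close>)
    fix z w assume "dist z x < d" "dist w x < d"
    obtain uz uw where "uz \<in> S z" "uw \<in> S w" using nonempty by (meson ex_in_conv)
    have bound: "\<bar>inner (z - w) u - inner v (z - w)\<bar> \<le> e * norm (z - w)" if "dist u v < e" for u
    proof -
      have "\<bar>inner (z - w) u - inner v (z - w)\<bar> = \<bar>inner (z - w) (u - v)\<bar>"
        by (simp add: inner_diff_right inner_commute)
      also have "\<dots> \<le> norm (z - w) * norm (u - v)" by (rule Cauchy_Schwarz_ineq2)
      also have "\<dots> \<le> norm (z - w) * e" using that by (intro mult_left_mono) (auto simp: dist_norm)
      finally show ?thesis by (simp add: mult.commute)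
    qed
    have "\<bar>inner (z - w) uz - inner v (z - w)\<bar> \<le> e * norm (z - w)"
      "\<bar>inner (z - w) uw - inner v (z - w)\<bar> \<le> e * norm (z - w)"
      using bound d \<open>uz \<in> S z\<close> \<open>uw \<in> S w\<close> \<open>dist z x < d\<close> \<open>dist w x < d\<close> by simp_all
    moreover have "\<phi> z - inner (z - w) uz \<le> \<phi> w" "\<phi> w + inner (z - w) uw \<le> \<phi> z"
      using subgradient[OF \<open>uz \<in> S z\<close>, of w] subgradient[OF \<open>uw \<in> S w\<close>, of z]
      by (simp_all add: inner_diff_left)
    ultimately show "norm (\<phi> z - \<phi> w - inner v (z - w)) \<le> e * norm (z - w)"
      unfolding real_norm_def abs_le_iff by linarith
  qed
qed

section \<open>Unique minimisers with linear growth\<close>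

definition affine_envelope :: "(real \<times> real) set \<Rightarrow> real \<Rightarrow> ereal" where
  "affine_envelope A t = (SUP p\<in>A. ereal (fst p * t + snd p))"

lemma affine_envelope_upper: "p \<in> A \<Longrightarrow> ereal (fst p * t + snd p) \<le> affine_envelope A t"
  unfolding affine_envelope_def by (rule SUP_upper)

lemma affine_envelope_convex:
  assumes "\<theta> \<in> {0..1}"
  shows "affine_envelope A (\<theta> * a + (1 - \<theta>) * b)
           \<le> ereal \<theta> * affine_envelope A a + ereal (1 - \<theta>) * affine_envelope A b"
  unfolding affine_envelope_def[of A "\<theta> * a + (1 - \<theta>) * b"]
proof (rule SUP_least)
  fix p assume "p \<in> A"
  have "ereal (fst p * (\<theta> * a + (1 - \<theta>) * b) + snd p)
      = ereal \<theta> * ereal (fst p * a + snd p) + ereal (1 - \<theta>) * ereal (fst p * b + snd p)"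
    by (simp add: algebra_simps)
  also have "\<dots> \<le> ereal \<theta> * affine_envelope A a + ereal (1 - \<theta>) * affine_envelope A b"
    using assms \<open>p \<in> A\<close> by (intro add_mono ereal_mult_left_mono affine_envelope_upper) auto
  finally show "ereal (fst p * (\<theta> * a + (1 - \<theta>) * b) + snd p)
      \<le> ereal \<theta> * affine_envelope A a + ereal (1 - \<theta>) * affine_envelope A b" .
qed

lemma affine_envelope_lsc: "affine_envelope A t \<le> Liminf (at t within S) (affine_envelope A)"
  unfolding le_Liminf_iff
proof (intro allI impI)
  fix c assume "c < affine_envelope A t"
  then obtain p where p: "p \<in> A" "c < ereal (fst p * t + snd p)"
    by (auto simp: affine_envelope_def less_SUP_iff)
  have "((\<lambda>s. ereal (fst p * s + snd p)) \<longlongrightarrow> ereal (fst p * t + snd p)) (at t within S)"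
    by (intro tendsto_intros)
  then have "\<forall>\<^sub>F s in at t within S. c < ereal (fst p * s + snd p)"
    using p(2) by (rule order_tendstoD(1))
  then show "\<forall>\<^sub>F s in at t within S. c < affine_envelope A s"
    by (rule eventually_mono) (erule less_le_trans[OF _ affine_envelope_upper[OF p(1)]])
qed

locale unique_minimizer =
  fixes F :: "'a::euclidean_space \<Rightarrow> ereal" and v :: 'a and m :: real
  assumes lsc: "lsc F"
    and min_value: "F v = ereal m"
    and unique: "\<And>y. y \<noteq> v \<Longrightarrow> ereal m < F y"
    and linear_growth: "\<exists>T. \<forall>y. T \<le> norm (y - v) \<longrightarrow> ereal (m + norm (y - v)) \<le> F y"
begin

lemma min_le: "ereal m \<le> F y"
  using unique min_value by (cases "y = v") (auto intro: less_imp_le)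

lemma well_separated:
  assumes "s > 0"
  obtains \<mu> where "\<mu> > 0" "\<And>y. s \<le> norm (y - v) \<Longrightarrow> ereal (m + \<mu>) \<le> F y"
proof -
  obtain T where T: "\<And>y. T \<le> norm (y - v) \<Longrightarrow> ereal (m + norm (y - v)) \<le> F y"
    using linear_growth by blast
  define R where "R = max T s"
  define K where "K = cball v R - ball v s"
  obtain b :: 'a where "norm b = s" using vector_choose_size assms by (metis less_imp_le)
  then have "v + b \<in> K" by (simp add: K_def R_def dist_norm)
  moreover have "compact K" unfolding K_def by (intro compact_diff compact_cball open_ball)
  ultimately obtain ys where "ys \<in> K" and ys: "\<And>y. y \<in> K \<Longrightarrow> F ys \<le> F y"
    using lsc_attains_min_on_compact[OF lsc] by blast
  then have "ys \<noteq> v" using assms by (auto simp: K_def)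
  then have "ereal m < F ys" by (rule unique)
  then obtain e where "ereal m < ereal e" "ereal e < F ys" using ereal_dense2 by blast
  then have e: "m < e" "ereal e < F ys" by simp_all
  show ?thesis
  proof
    show "min (e - m) s > 0" using e assms by simp
    fix y assume y: "s \<le> norm (y - v)"
    show "ereal (m + min (e - m) s) \<le> F y"
    proof (cases "norm (y - v) \<le> R")
      case True
      then have "y \<in> K" using y by (simp add: K_def dist_norm norm_minus_commute)
      then have "ereal e \<le> F y" using ys e(2) by (meson less_imp_le order_trans)
      then show ?thesis by (rule order_trans[rotated]) simp
    next
      case False
      then have "ereal (m + norm (y - v)) \<le> F y" using T by (simp add: R_def)
      then show ?thesis by (rule order_trans[rotated]) (use y in simp)
    qed
  qed
qed

lemma tilted_minimizers_near:
  assumes "\<epsilon> > 0"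
  shows "\<exists>\<delta>>0. \<forall>p u. norm p < \<delta> \<longrightarrow> (\<forall>y. F u - ereal (inner p u) \<le> F y - ereal (inner p y))
           \<longrightarrow> norm (u - v) < \<epsilon>"
proof -
  obtain T where T: "\<And>y. T \<le> norm (y - v) \<Longrightarrow> ereal (m + norm (y - v)) \<le> F y"
    using linear_growth by blast
  define T' where "T' = max T \<epsilon>"
  have "T' > 0" using assms by (simp add: T'_def)
  obtain \<mu> where "\<mu> > 0" and \<mu>: "\<And>y. \<epsilon> \<le> norm (y - v) \<Longrightarrow> ereal (m + \<mu>) \<le> F y"
    using well_separated[OF assms] by blast
  show ?thesis
  proof (intro exI[of _ "min 1 (\<mu> / T')"] conjI allI impI)
    show "min 1 (\<mu> / T') > 0" using \<open>\<mu> > 0\<close> \<open>T' > 0\<close> by simp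
    fix p u assume p: "norm p < min 1 (\<mu> / T')"
      and u: "\<forall>y. F u - ereal (inner p u) \<le> F y - ereal (inner p y)"
    have gain: "c \<le> norm p * norm (u - v)" if "ereal (m + c) \<le> F u" for c
    proof -
      have "ereal (m + c) - ereal (inner p u) \<le> ereal m - ereal (inner p v)"
        using that u min_value by (metis ereal_minus_mono order_refl order_trans)
      then have "c \<le> inner p (u - v)" by (simp add: inner_diff_right)
      also have "\<dots> \<le> norm p * norm (u - v)" by (rule norm_cauchy_schwarz)
      finally show ?thesis .
    qed
    show "norm (u - v) < \<epsilon>"
    proof (rule ccontr)
      assume "\<not> norm (u - v) < \<epsilon>"
      show False
      proof (cases "T' \<le> norm (u - v)")
        case True
        then have "norm (u - v) \<le> norm p * norm (u - v)" using gain T by (simp add: T'_def)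
        moreover have "norm p * norm (u - v) < 1 * norm (u - v)"
          using p True \<open>T' > 0\<close> by (intro mult_strict_right_mono) auto
        ultimately show False by simp
      next
        case False
        have "\<mu> \<le> norm p * norm (u - v)" using gain \<mu> \<open>\<not> norm (u - v) < \<epsilon>\<close> by simp
        also have "\<dots> \<le> norm p * T'" using False by (intro mult_left_mono) auto
        also have "\<dots> < (\<mu> / T') * T'" using p \<open>T' > 0\<close> by (intro mult_strict_right_mono) auto
        finally show False using \<open>T' > 0\<close> by simp
      qed
    qed
  qed
qed

lemma linear_minorant:
  assumes "s > 0"
  obtains \<alpha> where "\<alpha> > 0" "\<And>y. ereal (m + \<alpha> * (norm (y - v) - s)) \<le> F y"
proof -
  obtain T where T: "\<And>y. T \<le> norm (y - v) \<Longrightarrow> ereal (m + norm (y - v)) \<le> F y"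
    using linear_growth by blast
  define T' where "T' = max T s"
  have "T' > 0" using assms by (simp add: T'_def)
  obtain \<mu> where "\<mu> > 0" and \<mu>: "\<And>y. s \<le> norm (y - v) \<Longrightarrow> ereal (m + \<mu>) \<le> F y"
    using well_separated[OF assms] by blast
  define \<alpha> where "\<alpha> = min 1 (\<mu> / T')"
  have "\<alpha> > 0" "\<alpha> \<le> 1" "\<alpha> * T' \<le> \<mu>"
    using \<open>\<mu> > 0\<close> \<open>T' > 0\<close> by (auto simp: \<alpha>_def min_def field_simps)
  show ?thesis
  proof (rule that[OF \<open>\<alpha> > 0\<close>])
    fix y
    define d where "d = norm (y - v)"
    consider "d < s" | "s \<le> d" "d < T'" | "T' \<le> d" by linarith
    then have "ereal (m + \<alpha> * (d - s)) \<le> F y"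
    proof cases
      case 1
      then have "\<alpha> * (d - s) \<le> 0" using \<open>\<alpha> > 0\<close> by (simp add: mult_le_0_iff)
      then show ?thesis by (intro order_trans[OF _ min_le]) simp
    next
      case 2
      then have "\<alpha> * (d - s) \<le> \<alpha> * T'" using \<open>\<alpha> > 0\<close> \<open>s > 0\<close> by (intro mult_left_mono) auto
      then have "ereal (m + \<alpha> * (d - s)) \<le> ereal (m + \<mu>)" using \<open>\<alpha> * T' \<le> \<mu>\<close> by simp
      also have "\<dots> \<le> F y" using \<mu> 2 by (simp add: d_def)
      finally show ?thesis .
    next
      case 3
      then have "\<alpha> * (d - s) \<le> 1 * (d - s)"
        using \<open>\<alpha> \<le> 1\<close> by (intro mult_right_mono) (auto simp: T'_def)
      then have "ereal (m + \<alpha> * (d - s)) \<le> ereal (m + d)" using \<open>s > 0\<close> by simp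
      also have "\<dots> \<le> F y" using T 3 by (simp add: d_def T'_def)
      finally show ?thesis .
    qed
    then show "ereal (m + \<alpha> * (norm (y - v) - s)) \<le> F y" by (simp add: d_def)
  qed
qed

lemma Gamma0_growth_modulus:
  obtains \<psi> where "Gamma0 \<psi>" "\<And>y. ereal m + \<psi> (norm (y - v)) \<le> F y"
proof -
  define A where "A = {p. \<forall>y. ereal (m + fst p * norm (y - v) + snd p) \<le> F y}"
  have "(0, 0) \<in> A" using min_le by (simp add: A_def)
  then have nonneg: "0 \<le> affine_envelope A t" for t
    using affine_envelope_upper[of "(0, 0)" A t] by (simp add: zero_ereal_def)
  have at_0: "affine_envelope A 0 \<le> 0"
    unfolding affine_envelope_def
  proof (rule SUP_least)
    fix p assume "p \<in> A"
    then have "ereal (m + fst p * norm (v - v) + snd p) \<le> F v" unfolding A_def by blast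
    then show "ereal (fst p * 0 + snd p) \<le> 0" using min_value by (simp add: zero_ereal_def)
  qed
  have pos: "0 < affine_envelope A t" if "t > 0" for t
  proof -
    obtain \<alpha> where "\<alpha> > 0" and \<alpha>: "\<And>y. ereal (m + \<alpha> * (norm (y - v) - t / 2)) \<le> F y"
      using linear_minorant[of "t / 2"] \<open>t > 0\<close> by auto
    then have "(\<alpha>, - \<alpha> * t / 2) \<in> A" by (simp add: A_def algebra_simps)
    from affine_envelope_upper[OF this, of t] have "ereal (\<alpha> * t / 2) \<le> affine_envelope A t" by simp
    moreover have "0 < ereal (\<alpha> * t / 2)" using \<open>\<alpha> > 0\<close> \<open>t > 0\<close> by simp
    ultimately show ?thesis by (rule less_le_trans[rotated])
  qed
  have "affine_envelope A t = 0 \<longleftrightarrow> t = 0" if "t \<ge> 0" for t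
  proof
    assume "affine_envelope A t = 0"
    then show "t = 0" using pos[of t] that by force
  qed (use at_0 nonneg[of 0] in simp)
  then have "Gamma0 (affine_envelope A)"
    unfolding Gamma0_def
    using nonneg affine_envelope_convex affine_envelope_lsc by (intro conjI allI impI ballI) simp_all
  moreover have "ereal m + affine_envelope A (norm (y - v)) \<le> F y" for y
  proof (cases "F y")
    case (real r)
    have "affine_envelope A (norm (y - v)) \<le> ereal (r - m)"
      unfolding affine_envelope_def
    proof (rule SUP_least)
      fix p assume "p \<in> A"
      then have "ereal (m + fst p * norm (y - v) + snd p) \<le> F y" unfolding A_def by blast
      then show "ereal (fst p * norm (y - v) + snd p) \<le> ereal (r - m)" using real by simp
    qed
    then show ?thesis using real by (cases "affine_envelope A (norm (y - v))") auto
  qed (use min_le[of y] in auto)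
  ultimately show ?thesis using that by blast
qed

end

section \<open>The proximal mapping as the argmin of tilted functions\<close>

locale prox_setting =
  fixes f :: "'a::euclidean_space \<Rightarrow> ereal" and lam :: real
  assumes proper: "proper_fun f" and lsc_f: "lsc f" and lam_pos: "0 < lam"
    and below_threshold: "ereal lam < prox_threshold f"
begin

definition G :: "'a \<Rightarrow> ereal" where
  "G y = ereal lam * f y + jfun y"

definition tilted :: "'a \<Rightarrow> 'a \<Rightarrow> ereal" where
  "tilted z y = ereal lam * f y + ereal (norm y ^ 2 / 2 - inner z y)"

definition conjG :: "'a \<Rightarrow> real" where
  "conjG z = real_of_ereal (fconj G z)"

lemma f_not_minf: "f y \<noteq> -\<infinity>"
  using proper by (simp add: proper_fun_def)

lemma tilted_not_minf: "tilted z y \<noteq> -\<infinity>"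
  using f_not_minf[of y] lam_pos by (cases "f y") (auto simp: tilted_def)

lemma G_eq_tilted: "G y = tilted z y + ereal (inner z y)"
  using f_not_minf[of y] lam_pos by (cases "f y") (auto simp: tilted_def G_def jfun_def)

lemma tilted_tilt: "tilted z y = tilted x y - ereal (inner (z - x) y)"
  using f_not_minf[of y] lam_pos by (cases "f y") (auto simp: tilted_def inner_diff_left)

lemma lsc_tilted: "lsc (tilted z)"
proof -
  have "lsc (\<lambda>y. ereal lam * f y + ereal (norm y ^ 2 / 2 - inner z y))"
    using lam_pos by (intro lsc_add_continuous lsc_cmult lsc_f continuous_intros) auto
  then show ?thesis by (simp add: tilted_def[abs_def])
qed

lemma prox_objective_scaled:
  "ereal lam * (f y + ereal (norm (y - z) ^ 2 / (2 * lam))) = tilted z y + ereal (norm z ^ 2 / 2)"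
proof (cases "f y")
  case (real r)
  have "lam * (r + norm (y - z) ^ 2 / (2 * lam)) = lam * r + (norm y ^ 2 / 2 - inner z y) + norm z ^ 2 / 2"
    using lam_pos by (simp add: power2_norm_eq_inner inner_diff_left inner_diff_right inner_commute field_simps)
  then show ?thesis using real by (simp add: tilted_def)
qed (use f_not_minf lam_pos in \<open>auto simp: tilted_def\<close>)

lemma prox_map_iff_tilted_min: "u \<in> prox_map lam f z \<longleftrightarrow> (\<forall>y. tilted z u \<le> tilted z y)"
proof -
  have "f u + ereal (norm (u - z) ^ 2 / (2 * lam)) \<le> f y + ereal (norm (y - z) ^ 2 / (2 * lam))
     \<longleftrightarrow> ereal lam * (f u + ereal (norm (u - z) ^ 2 / (2 * lam)))
           \<le> ereal lam * (f y + ereal (norm (y - z) ^ 2 / (2 * lam)))" for y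
    using lam_pos by (simp add: ereal_mult_le_mult_iff)
  also have "\<dots> y \<longleftrightarrow> tilted z u \<le> tilted z y" for y
    by (simp add: prox_objective_scaled ereal_add_le_add_iff2)
  finally show ?thesis by (simp add: prox_map_def)
qed

lemma tilted_quadratic_minorant:
  obtains \<alpha> \<beta> \<gamma> where "\<alpha> > 0" "\<And>y. ereal (\<alpha> * norm y ^ 2 - \<beta> * norm y - \<gamma>) \<le> tilted z y"
proof -
  obtain l x' where "lam < l" "moreau_env l f x' > -\<infinity>"
    using below_threshold by (auto simp: prox_threshold_def less_Sup_iff)
  then obtain M where "ereal M < moreau_env l f x'" using ereal_dense2 by blast
  then have M: "ereal M < f y + ereal (norm (y - x') ^ 2 / (2 * l))" for y
    unfolding moreau_env_def by (rule less_INF_D) simp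
  define \<rho> where "\<rho> = lam / l"
  have "0 < \<rho>" "\<rho> < 1" using lam_pos \<open>lam < l\<close> by (auto simp: \<rho>_def)
  show ?thesis
  proof (rule that)
    show "(1 - \<rho>) / 2 > 0" using \<open>\<rho> < 1\<close> by simp
    fix y
    show "ereal ((1 - \<rho>) / 2 * norm y ^ 2 - (\<rho> * norm x' + norm z) * norm y - (\<rho> / 2 * norm x' ^ 2 - lam * M))
          \<le> tilted z y"
    proof (cases "f y")
      case (real r)
      have "lam * M < lam * (r + norm (y - x') ^ 2 / (2 * l))"
        using M[of y] real lam_pos by simp
      then have "lam * M < lam * r + \<rho> / 2 * norm (y - x') ^ 2"
        using lam_pos \<open>lam < l\<close> by (simp add: \<rho>_def field_simps)
      moreover have "norm (y - x') ^ 2 \<le> (norm y + norm x') ^ 2"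
        using norm_triangle_ineq4[of y x'] by (intro power_mono) auto
      then have "\<rho> / 2 * norm (y - x') ^ 2 \<le> \<rho> / 2 * (norm y + norm x') ^ 2"
        using \<open>0 < \<rho>\<close> by (intro mult_left_mono) auto
      moreover have "\<rho> / 2 * (norm y + norm x') ^ 2
          = \<rho> / 2 * norm y ^ 2 + \<rho> * (norm x' * norm y) + \<rho> / 2 * norm x' ^ 2"
        by (simp add: power2_sum algebra_simps)
      moreover have "(1 - \<rho>) / 2 * norm y ^ 2 - (\<rho> * norm x' + norm z) * norm y - (\<rho> / 2 * norm x' ^ 2 - lam * M)
          = norm y ^ 2 / 2 - \<rho> / 2 * norm y ^ 2 - \<rho> * (norm x' * norm y) - norm z * norm y
            - \<rho> / 2 * norm x' ^ 2 + lam * M"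
        by (simp add: field_simps)
      moreover have "inner z y \<le> norm z * norm y" by (rule norm_cauchy_schwarz)
      ultimately show ?thesis using real by (simp add: tilted_def)
    qed (use f_not_minf lam_pos in \<open>auto simp: tilted_def\<close>)
  qed
qed

lemma tilted_linear_growth: "\<exists>T. \<forall>y. T \<le> norm (y - v) \<longrightarrow> ereal (c + norm (y - v)) \<le> tilted z y"
proof -
  obtain \<alpha> \<beta> \<gamma> where "\<alpha> > 0" and quad: "\<And>y. ereal (\<alpha> * norm y ^ 2 - \<beta> * norm y - \<gamma>) \<le> tilted z y"
    using tilted_quadratic_minorant[of z] by blast
  obtain S where S: "\<And>s. S \<le> s \<Longrightarrow> (\<beta> + 1) * s + (\<gamma> + c + norm v) \<le> \<alpha> * s\<^sup>2"
    using quadratic_dominates_linear[OF \<open>\<alpha> > 0\<close>] by blast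
  have "ereal (c + norm (y - v)) \<le> tilted z y" if "S + norm v \<le> norm (y - v)" for y
  proof -
    have "norm (y - v) \<le> norm y + norm v" by (rule norm_triangle_ineq4)
    then have "c + norm (y - v) \<le> \<alpha> * norm y ^ 2 - \<beta> * norm y - \<gamma>"
      using S[of "norm y"] that by (simp add: algebra_simps)
    then show ?thesis using quad[of y] by (meson ereal_less_eq(3) order_trans)
  qed
  then show ?thesis by blast
qed

lemma tilted_finite_somewhere: obtains y0 where "tilted z y0 < \<infinity>"
proof -
  obtain y0 where "f y0 < \<infinity>" using proper by (auto simp: proper_fun_def)
  then have "tilted z y0 < \<infinity>" using f_not_minf[of y0] by (cases "f y0") (auto simp: tilted_def)
  then show ?thesis by (rule that)
qed

lemma prox_map_nonempty: "prox_map lam f z \<noteq> {}"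
proof -
  obtain y0 where "tilted z y0 < \<infinity>" by (rule tilted_finite_somewhere)
  then obtain h0 where h0: "tilted z y0 = ereal h0" using tilted_not_minf[of z y0] by (cases "tilted z y0") auto
  obtain T where T: "\<And>y. T \<le> norm (y - y0) \<Longrightarrow> ereal (h0 + norm (y - y0)) \<le> tilted z y"
    using tilted_linear_growth by blast
  have "tilted z y0 \<le> tilted z y" if "T \<le> dist y y0" for y
    using T[of y] that h0 by (simp add: dist_norm) (meson ereal_less_eq(3) le_add_same_cancel1 norm_ge_zero order_trans)
  then have "\<exists>u. \<forall>y. tilted z u \<le> tilted z y" by (rule lsc_attains_min_coercive[OF lsc_tilted])
  then show ?thesis using prox_map_iff_tilted_min by blast
qed

lemma tilted_finite_at_prox:
  assumes "u \<in> prox_map lam f z" obtains h where "tilted z u = ereal h"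
proof -
  obtain y0 where "tilted z y0 < \<infinity>" by (rule tilted_finite_somewhere)
  moreover have "tilted z u \<le> tilted z y0" using assms by (simp add: prox_map_iff_tilted_min)
  ultimately show ?thesis using that tilted_not_minf[of z u] by (cases "tilted z u") auto
qed

lemma fconj_G_eq: assumes "u \<in> prox_map lam f z" shows "fconj G z = - tilted z u"
proof -
  have "ereal (inner z y) - G y = - tilted z y" for y
    using f_not_minf[of y] lam_pos by (cases "f y") (auto simp: tilted_def G_def jfun_def)
  then have "fconj G z = (SUP y. - tilted z y)" by (simp add: fconj_def)
  also have "\<dots> = - tilted z u"
  proof (rule antisym)
    show "(SUP y. - tilted z y) \<le> - tilted z u"
      using assms by (intro SUP_least) (simp add: prox_map_iff_tilted_min)
  qed (rule SUP_upper, simp)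
  finally show ?thesis .
qed

lemma conjG_eq: "u \<in> prox_map lam f z \<Longrightarrow> conjG z = - real_of_ereal (tilted z u)"
  by (simp add: conjG_def fconj_G_eq)

lemma conjG_subgradient:
  assumes "u \<in> prox_map lam f z" shows "conjG z + inner (w - z) u \<le> conjG w"
proof -
  obtain u' where u': "u' \<in> prox_map lam f w" using prox_map_nonempty by blast
  obtain h where h: "tilted z u = ereal h" using assms by (rule tilted_finite_at_prox)
  obtain h' where h': "tilted w u' = ereal h'" using u' by (rule tilted_finite_at_prox)
  have "tilted w u' \<le> tilted w u" using u' by (simp add: prox_map_iff_tilted_min)
  also have "\<dots> = tilted z u - ereal (inner (w - z) u)" by (rule tilted_tilt)
  finally have "h' \<le> h - inner (w - z) u" using h h' by simp
  then show ?thesis using conjG_eq[OF assms] conjG_eq[OF u'] h h' by simp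
qed

lemma moreau_env_at_prox:
  assumes "u \<in> prox_map lam f z"
  shows "moreau_env lam f z = f u + ereal (norm (u - z) ^ 2 / (2 * lam))"
  unfolding moreau_env_def
proof (rule antisym)
  show "(INF y. f y + ereal (norm (y - z) ^ 2 / (2 * lam))) \<le> f u + ereal (norm (u - z) ^ 2 / (2 * lam))"
    by (rule INF_lower) simp
  show "f u + ereal (norm (u - z) ^ 2 / (2 * lam)) \<le> (INF y. f y + ereal (norm (y - z) ^ 2 / (2 * lam)))"
    using assms by (intro INF_greatest) (simp add: prox_map_def)
qed

lemma moreau_env_conjG: "real_of_ereal (moreau_env lam f z) = (norm z ^ 2 / 2 - conjG z) / lam"
proof -
  obtain u where u: "u \<in> prox_map lam f z" using prox_map_nonempty by blast
  obtain h where h: "tilted z u = ereal h" using u by (rule tilted_finite_at_prox)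
  have "ereal lam * moreau_env lam f z = ereal (h + norm z ^ 2 / 2)"
    using moreau_env_at_prox[OF u] prox_objective_scaled[of u z] h by simp
  moreover have "conjG z = - h" using conjG_eq[OF u] h by simp
  ultimately show ?thesis
    using lam_pos by (cases "moreau_env lam f z") (auto simp: field_simps)
qed

lemma unique_minimizer_tilted:
  assumes "prox_map lam f x = {v}"
  shows "unique_minimizer (tilted x) v (real_of_ereal (tilted x v))"
proof
  obtain h where h: "tilted x v = ereal h" using assms by (auto elim: tilted_finite_at_prox)
  then show "tilted x v = ereal (real_of_ereal (tilted x v))" by simp
  fix y assume "y \<noteq> v"
  then have "y \<notin> prox_map lam f x" using assms by blast
  then obtain w where "tilted x w < tilted x y" by (auto simp: prox_map_iff_tilted_min not_le)
  moreover have "v \<in> prox_map lam f x" using assms by simp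
  then have "tilted x v \<le> tilted x w" by (simp add: prox_map_iff_tilted_min)
  ultimately show "ereal (real_of_ereal (tilted x v)) < tilted x y" using h by simp
qed (use lsc_tilted tilted_linear_growth in auto)

lemma differentiable_conjG_imp_singleton:
  assumes "conjG differentiable (at x)" shows "\<exists>v. prox_map lam f x = {v}"
proof -
  obtain D where D: "(conjG has_derivative D) (at x)" using assms by (auto simp: differentiable_def)
  have "D h = inner u h" if "u \<in> prox_map lam f x" for u h
    using D conjG_subgradient[OF that] by (rule has_derivative_subgradient_eq)
  then have "u = w" if "u \<in> prox_map lam f x" "w \<in> prox_map lam f x" for u w
    using that by (metis inner_diff_left inner_eq_zero_iff right_minus_eq)
  then show ?thesis using prox_map_nonempty by blast
qed

lemma singleton_imp_has_strict_derivative_conjG: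
  assumes "prox_map lam f x = {v}" shows "has_strict_derivative conjG (inner v) x"
proof (rule has_strict_derivative_of_subgradients)
  interpret unique_minimizer "tilted x" v "real_of_ereal (tilted x v)"
    using assms by (rule unique_minimizer_tilted)
  fix e :: real assume "e > 0"
  then obtain d where "d > 0" and d: "\<forall>p u. norm p < d
      \<longrightarrow> (\<forall>y. tilted x u - ereal (inner p u) \<le> tilted x y - ereal (inner p y)) \<longrightarrow> norm (u - v) < e"
    using tilted_minimizers_near by blast
  have "dist u v < e" if "dist z x < d" "u \<in> prox_map lam f z" for z u
    using d[rule_format, of "z - x" u] that by (simp add: dist_norm prox_map_iff_tilted_min flip: tilted_tilt)
  then show "\<exists>d>0. \<forall>z u. dist z x < d \<longrightarrow> u \<in> prox_map lam f z \<longrightarrow> dist u v < e"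
    using \<open>d > 0\<close> by blast
qed (use conjG_subgradient prox_map_nonempty in auto)

lemma ess_strongly_convex_imp_singleton:
  assumes "u \<in> prox_map lam f x" and "ess_strongly_convex_at G u x"
  shows "prox_map lam f x = {u}"
proof -
  obtain \<psi> where "Gamma0 \<psi>" and \<psi>: "\<And>y. G u + ereal (inner (y - u) x) + \<psi> (norm (y - u)) \<le> G y"
    using assms(2) by (auto simp: ess_strongly_convex_at_def)
  have "w = u" if w: "w \<in> prox_map lam f x" for w
  proof -
    obtain h hw where h: "tilted x u = ereal h" and hw: "tilted x w = ereal hw"
      using assms(1) w by (meson tilted_finite_at_prox)
    have "tilted x w \<le> tilted x u" using w by (simp add: prox_map_iff_tilted_min)
    then have "hw \<le> h" using h hw by simp
    have "0 \<le> \<psi> (norm (w - u))" using \<open>Gamma0 \<psi>\<close> by (simp add: Gamma0_def)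
    moreover have "inner (w - u) x = inner x w - inner x u" by (metis inner_commute inner_diff_right)
    then have "ereal (h + inner x w) + \<psi> (norm (w - u)) \<le> ereal (hw + inner x w)"
      using \<psi>[of w] h hw by (simp add: G_eq_tilted[of _ x])
    ultimately have "\<psi> (norm (w - u)) \<le> 0"
      using \<open>hw \<le> h\<close> by (cases "\<psi> (norm (w - u))") auto
    then have "\<psi> (norm (w - u)) = 0" using \<open>0 \<le> \<psi> (norm (w - u))\<close> by simp
    then show "w = u" using \<open>Gamma0 \<psi>\<close> by (simp add: Gamma0_def)
  qed
  then show ?thesis using assms(1) by blast
qed

lemma singleton_imp_ess_strongly_convex:
  assumes "prox_map lam f x = {v}" shows "ess_strongly_convex_at G v x"
proof -
  interpret unique_minimizer "tilted x" v "real_of_ereal (tilted x v)"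
    using assms by (rule unique_minimizer_tilted)
  obtain \<psi> where "Gamma0 \<psi>" and \<psi>: "\<And>y. tilted x v + \<psi> (norm (y - v)) \<le> tilted x y"
    using Gamma0_growth_modulus min_value by metis
  obtain h where h: "tilted x v = ereal h" using min_value by blast
  have "G v + ereal (inner (y - v) x) + \<psi> (norm (y - v)) \<le> G y" for y
  proof -
    have "inner (y - v) x = inner x y - inner x v" by (metis inner_commute inner_diff_right)
    then have "G v + ereal (inner (y - v) x) = tilted x v + ereal (inner x y)"
      using h by (simp add: G_eq_tilted[of _ x])
    then have "G v + ereal (inner (y - v) x) + \<psi> (norm (y - v)) = (tilted x v + \<psi> (norm (y - v))) + ereal (inner x y)"
      by (simp add: ac_simps)
    also have "\<dots> \<le> G y" using \<psi>[of y] by (simp add: G_eq_tilted[of _ x] add_right_mono)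
    finally show ?thesis .
  qed
  moreover have "v \<in> edom G" using h by (simp add: edom_def G_eq_tilted[of _ x])
  ultimately show ?thesis using \<open>Gamma0 \<psi>\<close> by (auto simp: ess_strongly_convex_at_def)
qed

lemma singleton_iff_differentiable_conjG:
  "(\<exists>v. prox_map lam f x = {v}) \<longleftrightarrow> conjG differentiable (at x)"
  using differentiable_conjG_imp_singleton singleton_imp_has_strict_derivative_conjG
    has_strict_derivative_imp_has_derivative by (metis differentiableI)

lemma singleton_iff_strictly_differentiable_conjG:
  "(\<exists>v. prox_map lam f x = {v}) \<longleftrightarrow> strictly_differentiable conjG x"
  using singleton_iff_differentiable_conjG singleton_imp_has_strict_derivative_conjG
    has_strict_derivative_imp_has_derivative
  by (metis differentiableI strictly_differentiable_iff)

lemma strictly_differentiable_moreau_env_iff: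
  "strictly_differentiable (\<lambda>z. real_of_ereal (moreau_env lam f z)) x \<longleftrightarrow> strictly_differentiable conjG x"
proof
  assume "strictly_differentiable (\<lambda>z. real_of_ereal (moreau_env lam f z)) x"
  then obtain D where "has_strict_derivative (\<lambda>z. real_of_ereal (moreau_env lam f z)) D x"
    by (auto simp: strictly_differentiable_iff)
  with has_strict_derivative_half_norm_power2
  have "has_strict_derivative (\<lambda>z. 1 * (norm z ^ 2 / 2) + (- lam) * real_of_ereal (moreau_env lam f z))
          (\<lambda>h. 1 * inner x h + (- lam) * D h) x"
    by (rule has_strict_derivative_lincomb)
  moreover have "(\<lambda>z. 1 * (norm z ^ 2 / 2) + (- lam) * real_of_ereal (moreau_env lam f z)) = conjG"
    using lam_pos by (simp add: moreau_env_conjG)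
  ultimately show "strictly_differentiable conjG x" by (auto simp: strictly_differentiable_iff)
next
  assume "strictly_differentiable conjG x"
  then obtain D where "has_strict_derivative conjG D x" by (auto simp: strictly_differentiable_iff)
  with has_strict_derivative_half_norm_power2
  have "has_strict_derivative (\<lambda>z. 1 / lam * (norm z ^ 2 / 2) + (- 1 / lam) * conjG z)
          (\<lambda>h. 1 / lam * inner x h + (- 1 / lam) * D h) x"
    by (rule has_strict_derivative_lincomb)
  moreover have "(\<lambda>z. 1 / lam * (norm z ^ 2 / 2) + (- 1 / lam) * conjG z)
      = (\<lambda>z. real_of_ereal (moreau_env lam f z))"
    using lam_pos by (simp add: moreau_env_conjG field_simps)
  ultimately show "strictly_differentiable (\<lambda>z. real_of_ereal (moreau_env lam f z)) x"
    by (auto simp: strictly_differentiable_iff)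
qed

lemma singleton_iff_ess_strongly_convex:
  "(\<exists>v. prox_map lam f x = {v}) \<longleftrightarrow> (\<exists>u\<in>prox_map lam f x. ess_strongly_convex_at G u x)"
  using singleton_imp_ess_strongly_convex ess_strongly_convex_imp_singleton by blast

end

theorem mainTheorem9:
  fixes f :: "'a::euclidean_space \<Rightarrow> ereal" and lam :: real and x :: 'a
  assumes "proper_fun f" and "lsc f" and "prox_bounded f"
    and "prox_threshold f > 0"
    and "0 < lam" and "ereal lam < prox_threshold f"
    and "x \<in> edom f"
  defines "g \<equiv> (\<lambda>y. ereal lam * f y + jfun y)"
  shows "((\<exists>p. prox_map lam f x = {p})
            \<longleftrightarrow> strictly_differentiable (\<lambda>z. real_of_ereal (moreau_env lam f z)) x)
       \<and> ((\<exists>p. prox_map lam f x = {p})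
            \<longleftrightarrow> (\<lambda>z. real_of_ereal (fconj g z)) differentiable (at x))
       \<and> ((\<exists>p. prox_map lam f x = {p})
            \<longleftrightarrow> strictly_differentiable (\<lambda>z. real_of_ereal (fconj g z)) x)
       \<and> ((\<exists>p. prox_map lam f x = {p})
            \<longleftrightarrow> (\<exists>u\<in>prox_map lam f x. ess_strongly_convex_at g u x))
       \<and> ((\<exists>p. prox_map lam f x = {p}) \<longrightarrow>
            (\<exists>v. prox_map lam f x = {v}
                 \<and> ((\<lambda>z. real_of_ereal (fconj g z)) has_derivative (\<lambda>h. inner v h)) (at x)))"
proof -
  interpret prox_setting f lam
    using assms by unfold_locales auto
  have g: "g = G" by (rule ext) (simp add: g_def G_def)
  have conj: "(\<lambda>z. real_of_ereal (fconj G z)) = conjG" by (rule ext) (simp add: conjG_def)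
  show ?thesis
    unfolding g conj
    using singleton_iff_differentiable_conjG singleton_iff_strictly_differentiable_conjG
      strictly_differentiable_moreau_env_iff singleton_iff_ess_strongly_convex
      singleton_imp_has_strict_derivative_conjG has_strict_derivative_imp_has_derivative
    by blast
qed

end
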